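(* For every functor $F\colon(\mathcal C^\eta)^{\times n}\to\mathsf{Ch}(R)$, the diagram \[tF\xrightarrow{\xi_F}ttF\xrightarrow{t(\xi_F)}tttF\qquad\text{and}\qquad tF\xrightarrow{\xi_F}ttF\xrightarrow{\xi_{tF}}tttF\] commutes, i.e. $t(\xi_F)\circ\xi_F=\xi_{tF}\circ\xi_F$.
   Context: $R$ is a commutative ring, $\mathsf{Ch}(R)$ the category of unbounded chain complexes of $R$-modules. $\mathcal C$ is a simplicial model category, $\eta\colon A\to B$ a morphism, $\mathcal C^\eta$ the category of factorizations $A\to X\to B$ of $\eta$. For $\mathbf X=(X_1,\dots,X_n)$ and $U\subseteq\mathbf n=\{1,\dots,n\}$, $\mathbf X(U)$ is the $n$-tuple with $i$th entry $X_i$ if $i\notin U$, $B$ if $i\in U$. For $G\colon(\mathcal C^\eta)^{\times n}\to\mathsf{Ch}(R)$, $tG(\mathbf X)$ is the chain complex with $tG(\mathbf X)_k=\bigoplus_{T\subseteq\mathbf n}G(\mathbf X(T))_{k+|T|}$ and differential sending $x$ in summand $T$ to $(-1)^{|T|}d(x)+\sum_{i\notin T}(-1)^{|\{s\in T:s>i\}|+1}G(\mathbf X(T)\to\mathbf X(T\cup\{i\}))(x)$ (term $i$ in summand $T\cup\{i\}$); $t$ is an endofunctor of the functor category, acting on natural transformations componentwise on summands. Thus $ttG(\mathbf X)_k=\bigoplus_{(V,U)\in\mathcal P(\mathbf n)^2}G(\mathbf X(U\cup V))_{k+|U|+|V|}$, $U$ the outer and $V$ the inner index. Identify $(V,U)$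 with the $2\times n$ $0/1$ matrix with first row the indicator of $V$, second row that of $U$. $M_{2n}(T)$ is the set of $2\times n$ $0/1$ matrices whose column sums are $1$ in columns $j\in T$ and $0$ otherwise; $\operatorname{sgn}(W)=|\{(i,j):i<j,\ w_{2i}=w_{1j}=1\}|$. For any $G$, $\xi_G\colon tG\to ttG$ sends $y\in G(\mathbf X(T))_{k+|T|}$ to $\sum_{W\in M_{2n}(T)}(-1)^{\operatorname{sgn}(W)}y$, the $W$-term in the summand indexed by the pair corresponding to $W$. *)

theory Defs
  imports Main "HOL-Library.Function_Algebras"
begin

definition nset :: "nat \<Rightarrow> nat set" where
  "nset n = {1..n}"

definition sgnmul :: "nat \<Rightarrow> 'e::ab_group_add \<Rightarrow> 'e" where
  "sgnmul k x = (if even k then x else - x)"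

text \<open>X(U): replace the entries indexed by U by the terminal factorization B.\<close>
definition subst_tuple :: "'o \<Rightarrow> (nat \<Rightarrow> 'o) \<Rightarrow> nat set \<Rightarrow> (nat \<Rightarrow> 'o)" where
  "subst_tuple B X U = (\<lambda>i. if i \<in> U then B else X i)"

text \<open>A functor from n-tuples of objects of C^eta to chain complexes, given by:
  the carrier of G(X)_k, the differential G(X)_k -> G(X)_(k-1), and the action
  G(X -> X({i})) of the canonical structure morphism X -> X({i}).\<close>
record ('o, 'e) chfun =
  car :: "(nat \<Rightarrow> 'o) \<Rightarrow> int \<Rightarrow> 'e set"
  dif :: "(nat \<Rightarrow> 'o) \<Rightarrow> int \<Rightarrow> 'e \<Rightarrow> 'e"
  str :: "(nat \<Rightarrow> 'o) \<Rightarrow> nat \<Rightarrow> 'e \<Rightarrow> 'e"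

text \<open>The functor t. An element of tG(X)_k is a function T |-> component in
  G(X(T))_(k+|T|), zero outside the subsets of n.\<close>
definition tfun :: "nat \<Rightarrow> 'o \<Rightarrow> ('o, 'e::ab_group_add) chfun \<Rightarrow> ('o, nat set \<Rightarrow> 'e) chfun" where
  "tfun n B G = \<lparr>
     car = (\<lambda>X k. {f. (\<forall>T. T \<subseteq> nset n \<longrightarrow> f T \<in> car G (subst_tuple B X T) (k + int (card T)))
                      \<and> (\<forall>T. \<not> T \<subseteq> nset n \<longrightarrow> f T = 0)}),
     dif = (\<lambda>X k f. (\<lambda>T'. if T' \<subseteq> nset n then
              sgnmul (card T') (dif G (subst_tuple B X T') (k + int (card T')) (f T'))
              + (\<Sum>i\<in>T'. sgnmul (card {s\<in>T'. s > i} + 1)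
                     (str G (subst_tuple B X (T' - {i})) i (f (T' - {i}))))
            else 0)),
     str = (\<lambda>X i f. (\<lambda>T. if T \<subseteq> nset n \<and> i \<notin> T then str G (subst_tuple B X T) i (f T) else f T)) \<rparr>"

definition tnat :: "nat \<Rightarrow> 'o \<Rightarrow> ((nat \<Rightarrow> 'o) \<Rightarrow> 'x \<Rightarrow> 'y) \<Rightarrow> (nat \<Rightarrow> 'o) \<Rightarrow> (nat set \<Rightarrow> 'x) \<Rightarrow> (nat set \<Rightarrow> 'y)" where
  "tnat n B \<alpha> X f = (\<lambda>T. \<alpha> (subst_tuple B X T) (f T))"

text \<open>2 x n 0/1 matrices, rows indexed 1,2 and columns 1..n, entries zero elsewhere.\<close>
definition M2n :: "nat \<Rightarrow> nat set \<Rightarrow> (nat \<Rightarrow> nat \<Rightarrow> nat) set" where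
  "M2n n T = {w. (\<forall>r j. w r j \<in> {0, 1})
               \<and> (\<forall>r j. (r \<notin> {1, 2} \<or> j \<notin> nset n) \<longrightarrow> w r j = 0)
               \<and> (\<forall>j\<in>nset n. w 1 j + w 2 j = (if j \<in> T then 1 else 0))}"

definition sgnW :: "nat \<Rightarrow> (nat \<Rightarrow> nat \<Rightarrow> nat) \<Rightarrow> nat" where
  "sgnW n w = card {(i, j). i \<in> nset n \<and> j \<in> nset n \<and> i < j \<and> w 2 i = 1 \<and> w 1 j = 1}"

definition row :: "nat \<Rightarrow> (nat \<Rightarrow> nat \<Rightarrow> nat) \<Rightarrow> nat \<Rightarrow> nat set" where
  "row n w r = {j \<in> nset n. w r j = 1}"

text \<open>xi_G : tG -> ttG. An element of ttG(X) is a function U |-> (V |-> component),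
  U the outer and V the inner index; the matrix W corresponds to (V,U) =
  (first row, second row).\<close>
definition xi :: "nat \<Rightarrow> (nat set \<Rightarrow> 'e::ab_group_add) \<Rightarrow> nat set \<Rightarrow> nat set \<Rightarrow> 'e" where
  "xi n f = (\<lambda>U V. \<Sum>T\<in>Pow (nset n).
       \<Sum>w\<in>{w \<in> M2n n T. row n w 1 = V \<and> row n w 2 = U}. sgnmul (sgnW n w) (f T))"

definition xinat :: "nat \<Rightarrow> (nat \<Rightarrow> 'o) \<Rightarrow> (nat set \<Rightarrow> 'e::ab_group_add) \<Rightarrow> nat set \<Rightarrow> nat set \<Rightarrow> 'e" where
  "xinat n X f = xi n f"

end

theory Submission
  imports Defs
begin

(* The proof computes both sides in closed form:
   - a 2 x n matrix in M2n T is determined by its two rows (V, U), which must be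
     disjoint subsets of n with union T; hence xi f U V is the single term
     (-1)^c(U,V) f(U \<union> V), where c(U,V) counts the pairs i < j with i in U,
     j in V (lemma xi_explicit);
   - c is additive in each argument over disjoint unions (cross_card_Un_left/right);
   - consequently both composites equal  (-1)^(c(A,C)+c(U,A)+c(U,C)) f(U \<union> A \<union> C)
     when U, A, C are pairwise disjoint subsets of n, and 0 otherwise
     (lemmas t_xi_comp_xi and xi_comp_xi), from which the theorem is immediate.
   In particular the identity holds for every f, not only for elements of tF. *)

lemma sgnmul_sgnmul: "sgnmul a (sgnmul b x) = sgnmul (a + b) x"
  by (simp add: sgnmul_def)

lemma sgnmul_zero: "sgnmul k (0::'a::ab_group_add) = 0"
  by (simp add: sgnmul_def)

text \<open>Signs act pointwise on functions; needed because the inner values of xi are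
  themselves functions of the inner index.\<close>
lemma sgnmul_apply: "sgnmul k g x = sgnmul k (g x)"
  by (simp add: sgnmul_def)

text \<open>The pairs i < j in n with i in U and j in V; their number is the sign
  exponent of the matrix with rows V and U.\<close>
definition cross :: "nat \<Rightarrow> nat set \<Rightarrow> nat set \<Rightarrow> (nat \<times> nat) set" where
  "cross n U V = {(i, j). i \<in> nset n \<and> j \<in> nset n \<and> i < j \<and> i \<in> U \<and> j \<in> V}"

lemma finite_cross: "finite (cross n U V)"
  by (rule finite_subset[of _ "nset n \<times> nset n"]) (auto simp: cross_def nset_def)

lemma cross_card_Un_right:
  assumes "A \<inter> C = {}"
  shows "card (cross n U (A \<union> C)) = card (cross n U A) + card (cross n U C)"
proof -
  have "cross n U (A \<union> C) = cross n U A \<union> cross n U C"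
    and "cross n U A \<inter> cross n U C = {}"
    using assms by (auto simp: cross_def)
  then show ?thesis by (simp add: finite_cross card_Un_disjoint)
qed

lemma cross_card_Un_left:
  assumes "U \<inter> A = {}"
  shows "card (cross n (U \<union> A) C) = card (cross n U C) + card (cross n A C)"
proof -
  have "cross n (U \<union> A) C = cross n U C \<union> cross n A C"
    and "cross n U C \<inter> cross n A C = {}"
    using assms by (auto simp: cross_def)
  then show ?thesis by (simp add: finite_cross card_Un_disjoint)
qed

definition rows_mat :: "nat set \<Rightarrow> nat set \<Rightarrow> nat \<Rightarrow> nat \<Rightarrow> nat" where
  "rows_mat V U = (\<lambda>r j. if r = 1 \<and> j \<in> V then 1 else if r = 2 \<and> j \<in> U then 1 else 0)"

lemma sgnW_rows_mat: "sgnW n (rows_mat V U) = card (cross n U V)"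
  unfolding sgnW_def cross_def rows_mat_def
  by (rule arg_cong[where f = card]) (auto split: if_splits)

lemma rows_mat_in_M2n:
  assumes "U \<subseteq> nset n" "V \<subseteq> nset n" "U \<inter> V = {}"
  shows "rows_mat V U \<in> M2n n (U \<union> V)"
  unfolding M2n_def mem_Collect_eq
proof (intro conjI allI ballI impI)
  fix r j
  show "rows_mat V U r j \<in> {0, 1}" by (simp add: rows_mat_def)
  show "rows_mat V U r j = 0" if "r \<notin> {1, 2} \<or> j \<notin> nset n"
    using that assms by (auto simp: rows_mat_def)
next
  fix j
  show "rows_mat V U 1 j + rows_mat V U 2 j = (if j \<in> U \<union> V then 1 else 0)"
    using assms(3) by (auto simp: rows_mat_def)
qed

lemma row_rows_mat:
  assumes "U \<subseteq> nset n" "V \<subseteq> nset n"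
  shows "row n (rows_mat V U) 1 = V" and "row n (rows_mat V U) 2 = U"
  using assms by (auto simp: row_def rows_mat_def)
lemma M2n_rows:
  assumes w: "w \<in> M2n n T" and T: "T \<subseteq> nset n"
  shows "w = rows_mat (row n w 1) (row n w 2)"
    and "row n w 1 \<inter> row n w 2 = {}"
    and "T = row n w 1 \<union> row n w 2"
proof -
  have w01: "\<And>r j. w r j \<in> {0, 1}"
    and w0: "\<And>r j. r \<notin> {1, 2} \<or> j \<notin> nset n \<Longrightarrow> w r j = 0"
    and wsum: "\<And>j. j \<in> nset n \<Longrightarrow> w 1 j + w 2 j = (if j \<in> T then 1 else 0)"
    using w by (auto simp: M2n_def)
  show "w = rows_mat (row n w 1) (row n w 2)"
  proof (intro ext)
    fix r j
    show "w r j = rows_mat (row n w 1) (row n w 2) r j"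
      using w01[of r j] w0[of r j] wsum[of j]
      by (cases "r \<in> {1, 2} \<and> j \<in> nset n") (auto simp: rows_mat_def row_def)
  qed
  show "row n w 1 \<inter> row n w 2 = {}"
  proof (rule ccontr)
    assume "row n w 1 \<inter> row n w 2 \<noteq> {}"
    then obtain j where "j \<in> nset n" "w 1 j = 1" "w 2 j = 1"
      by (auto simp: row_def)
    then show False
      using wsum[of j] by (simp split: if_splits)
  qed
  show "T = row n w 1 \<union> row n w 2"
  proof (rule set_eqI)
    fix j
    show "j \<in> T \<longleftrightarrow> j \<in> row n w 1 \<union> row n w 2"
    proof (cases "j \<in> nset n")
      case True
      then show ?thesis
        using wsum[of j] w01[of 1 j] w01[of 2 j] by (auto simp: row_def split: if_splits)
    next
      case False
      then show ?thesis
        using T by (auto simp: row_def)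
    qed
  qed
qed

lemma M2n_fibre:
  assumes "T \<subseteq> nset n"
  shows "{w \<in> M2n n T. row n w 1 = V \<and> row n w 2 = U} =
    (if T = U \<union> V \<and> U \<subseteq> nset n \<and> V \<subseteq> nset n \<and> U \<inter> V = {}
     then {rows_mat V U} else {})"
proof (cases "T = U \<union> V \<and> U \<subseteq> nset n \<and> V \<subseteq> nset n \<and> U \<inter> V = {}")
  case True
  then have "rows_mat V U \<in> M2n n T" "row n (rows_mat V U) 1 = V" "row n (rows_mat V U) 2 = U"
    using rows_mat_in_M2n[of U n V] row_rows_mat[of U n V] by simp_all
  moreover have "w = rows_mat V U"
    if "w \<in> M2n n T" "row n w 1 = V" "row n w 2 = U" for w
    using M2n_rows(1)[OF that(1) assms] that(2,3) by simp
  ultimately have "{w \<in> M2n n T. row n w 1 = V \<and> row n w 2 = U} = {rows_mat V U}"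
    by blast
  then show ?thesis
    using True by simp
next
  case False
  have "\<not> (w \<in> M2n n T \<and> row n w 1 = V \<and> row n w 2 = U)" for w
  proof
    assume w: "w \<in> M2n n T \<and> row n w 1 = V \<and> row n w 2 = U"
    have "U \<subseteq> nset n" "V \<subseteq> nset n"
      using w by (auto simp: row_def)
    moreover have "U \<inter> V = {}" "T = U \<union> V"
      using M2n_rows(2,3)[OF _ assms, of w] w by auto
    ultimately show False
      using False by blast
  qed
  then show ?thesis
    using False by auto
qed

lemma xi_explicit:
  "xi n f U V = (if U \<subseteq> nset n \<and> V \<subseteq> nset n \<and> U \<inter> V = {}
                 then sgnmul (card (cross n U V)) (f (U \<union> V)) else 0)"
proof -
  let ?adm = "U \<subseteq> nset n \<and> V \<subseteq> nset n \<and> U \<inter> V = {}"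
  have "xi n f U V = (\<Sum>T\<in>Pow (nset n).
      if T = U \<union> V \<and> ?adm then sgnmul (card (cross n U V)) (f T) else 0)"
    unfolding xi_def
  proof (rule sum.cong)
    fix T
    assume "T \<in> Pow (nset n)"
    then show "(\<Sum>w\<in>{w \<in> M2n n T. row n w 1 = V \<and> row n w 2 = U}. sgnmul (sgnW n w) (f T))
        = (if T = U \<union> V \<and> ?adm then sgnmul (card (cross n U V)) (f T) else 0)"
      by (simp only: M2n_fibre Pow_iff) (simp add: sgnW_rows_mat)
  qed simp
  also have "\<dots> = (if ?adm then sgnmul (card (cross n U V)) (f (U \<union> V)) else 0)"
  proof (cases ?adm)
    case True
    then have "U \<union> V \<in> Pow (nset n)" by auto
    then show ?thesis
      by (simp only: True simp_thms sum.delta' finite_Pow_iff) (simp add: nset_def)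
  next
    case False
    then show ?thesis
      by (simp only: False simp_thms if_False sum.neutral_const)
  qed
  finally show ?thesis .
qed

text \<open>The common value of both composites tF -> tttF at the indices (U, A, C).\<close>
definition triple_term :: "nat \<Rightarrow> (nat set \<Rightarrow> 'e::ab_group_add) \<Rightarrow> nat set \<Rightarrow> nat set \<Rightarrow> nat set \<Rightarrow> 'e" where
  "triple_term n f U A C =
     (if U \<subseteq> nset n \<and> A \<subseteq> nset n \<and> C \<subseteq> nset n \<and> U \<inter> A = {} \<and> U \<inter> C = {} \<and> A \<inter> C = {}
      then sgnmul (card (cross n A C) + card (cross n U A) + card (cross n U C)) (f (U \<union> A \<union> C))
      else 0)"

text \<open>t(xi) after xi: xi is applied inside the outer summand U.\<close>
lemma t_xi_comp_xi: "xi n (xi n f U) A C = triple_term n f U A C"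
  by (auto simp: triple_term_def xi_explicit sgnmul_sgnmul sgnmul_zero cross_card_Un_right
      Int_Un_distrib Un_ac algebra_simps)

text \<open>xi_tF after xi: xi is applied to the outer pair, splitting U \<union> A.\<close>
lemma xi_comp_xi: "xi n (xi n f) U A C = triple_term n f U A C"
proof (cases "U \<inter> A = {}")
  case True
  then have "card (cross n (U \<union> A) C) = card (cross n U C) + card (cross n A C)"
    by (rule cross_card_Un_left)
  then show ?thesis
    using True by (auto simp: triple_term_def xi_explicit sgnmul_apply sgnmul_sgnmul sgnmul_zero
        Int_Un_distrib2 Un_ac algebra_simps)
next
  case False
  then show ?thesis
    by (auto simp: triple_term_def xi_explicit sgnmul_apply sgnmul_zero)
qed

theorem mainTheorem9:
  fixes n :: nat and B :: 'o and F :: "('o, 'e::ab_group_add) chfun"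
    and X :: "nat \<Rightarrow> 'o" and k :: int and f :: "nat set \<Rightarrow> 'e"
  assumes "f \<in> car (tfun n B F) X k"
  shows "tnat n B (xinat n) X (xinat n X f) = xinat n X (xinat n X f)"
proof (intro ext)
  fix U A C
  have "tnat n B (xinat n) X (xinat n X f) U A C = xi n (xi n f U) A C"
    by (simp add: tnat_def xinat_def)
  also have "\<dots> = triple_term n f U A C"
    by (rule t_xi_comp_xi)
  also have "\<dots> = xi n (xi n f) U A C"
    by (rule xi_comp_xi[symmetric])
  also have "\<dots> = xinat n X (xinat n X f) U A C"
    by (simp add: xinat_def)
  finally show "tnat n B (xinat n) X (xinat n X f) U A C = xinat n X (xinat n X f) U A C" .
qed

end
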